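(* Let $m,n$ be even nonnegative integers. If $A(m)$ and $A(n)$ are isomorphic as edge-labeled directed graphs, then $m=n$.
   Context: A hyperbinary expansion of a nonnegative integer $n$ is a word $x_0\cdots x_k$ over $\{0,1,2\}$ with $x_0\ne0$ and $\sum_i x_i2^{k-i}=n$; the empty word is the unique expansion of $0$. $\mathcal H(n)$ is the set of such expansions. $A(n)$ is the directed graph on $\mathcal H(n)$ with the following labeled arcs, for arbitrary words $\mathbf x,\mathbf y$ whenever both endpoints lie in $\mathcal H(n)$: \begin{itemize} \item an arc labeled $\to$ from $\mathbf x02\mathbf y$ to $\mathbf x10\mathbf y$ and from $2\mathbf y$ to $10\mathbf y$; \item an arc labeled $\twoheadrightarrow$ from $\mathbf x12\mathbf y$ to $\mathbf x20\mathbf y$. \end{itemize} An isomorphism of edge-labeled directed graphs is a bijection $\varphi$ of vertex sets such that $(x,y)$ is an arc with label $\ell$ if and only if $(\varphi(x),\varphi(y))$ is an arc with label $\ell$. *)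

theory Defs
  imports Main
begin

text \<open>Words over the alphabet {0,1,2} are represented as lists of naturals.
  The value of a word x_0...x_k is sum x_i 2^(k-i) (most significant digit first).\<close>

fun hval :: "nat list \<Rightarrow> nat" where
  "hval w = foldl (\<lambda>a d. 2 * a + d) 0 w"

definition hyperbinary :: "nat \<Rightarrow> nat list set" where
  "hyperbinary n = {w. set w \<subseteq> {0, 1, 2} \<and> (w \<noteq> [] \<longrightarrow> hd w \<noteq> 0) \<and> hval w = n}"

definition arcA :: "nat \<Rightarrow> nat list \<Rightarrow> nat list \<Rightarrow> bool" where
  "arcA n u v \<longleftrightarrow> u \<in> hyperbinary n \<and> v \<in> hyperbinary n \<and>
     ((\<exists>x y. u = x @ [0, 2] @ y \<and> v = x @ [1, 0] @ y) \<or>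
      (\<exists>y. u = 2 # y \<and> v = [1, 0] @ y))"

definition arcB :: "nat \<Rightarrow> nat list \<Rightarrow> nat list \<Rightarrow> bool" where
  "arcB n u v \<longleftrightarrow> u \<in> hyperbinary n \<and> v \<in> hyperbinary n \<and>
     (\<exists>x y. u = x @ [1, 2] @ y \<and> v = x @ [2, 0] @ y)"

definition A_iso :: "nat \<Rightarrow> nat \<Rightarrow> bool" where
  "A_iso m n \<longleftrightarrow> (\<exists>\<phi>. bij_betw \<phi> (hyperbinary m) (hyperbinary n) \<and>
     (\<forall>u\<in>hyperbinary m. \<forall>v\<in>hyperbinary m.
        (arcA m u v \<longleftrightarrow> arcA n (\<phi> u) (\<phi> v)) \<and>
        (arcB m u v \<longleftrightarrow> arcB n (\<phi> u) (\<phi> v))))"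

end

theory Submission
  imports Defs "HOL-Library.Discrete_Functions"
begin

text \<open>
  Let \<open>n\<close> be even with \<open>2 ^ M \<le> n < 2 ^ (M + 1)\<close>. Adding up a hyperbinary expansion of \<open>n\<close> from
  the least significant digit produces carries into some of the positions \<open>1, \<dots>, M\<close>; the set of
  these positions is a down-set of the fence on \<open>{1..M}\<close> in which \<open>q\<close> lies below \<open>q + 1\<close> iff bit
  \<open>q\<close> of \<open>n\<close> is set, and every down-set arises from exactly one expansion. The arcs of \<open>A(n)\<close> are
  precisely the removals of one maximal element \<open>p\<close> from the carry set, labelled by bit \<open>p\<close> of \<open>n\<close>.
  So \<open>A(n)\<close> is the labelled covering graph of the lattice of down-sets of this fence.

  The fence is recovered from that labelled lattice: its points are the join-irreducibles, ordered
  by inclusion, so its Hasse diagram, a path, is determined up to reversal, and the labels give the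
  bits of \<open>n\<close> at the points. A reversal forces the bits to alternate, and then yields the same bits.
  Hence \<open>A(m) \<cong> A(n)\<close> determines \<open>M\<close> and bits \<open>1, \<dots>, M\<close>, which for even numbers determine the
  number.
\<close>

definition labelled_iso ::
    "'a set \<Rightarrow> ('l \<Rightarrow> 'a \<Rightarrow> 'a \<Rightarrow> bool) \<Rightarrow> 'b set \<Rightarrow> ('l \<Rightarrow> 'b \<Rightarrow> 'b \<Rightarrow> bool) \<Rightarrow> ('a \<Rightarrow> 'b) \<Rightarrow> bool" where
  "labelled_iso V E W F f \<longleftrightarrow>
     bij_betw f V W \<and> (\<forall>u\<in>V. \<forall>v\<in>V. \<forall>l. E l u v \<longleftrightarrow> F l (f u) (f v))"

definition unlabelled_arc :: "'a set \<Rightarrow> ('l \<Rightarrow> 'a \<Rightarrow> 'a \<Rightarrow> bool) \<Rightarrow> 'a \<Rightarrow> 'a \<Rightarrow> bool" where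
  "unlabelled_arc V E u v \<longleftrightarrow> u \<in> V \<and> v \<in> V \<and> (\<exists>l. E l u v)"

lemma labelled_iso_inv:
  assumes "labelled_iso V E W F f"
  shows "labelled_iso W F V E (inv_into V f)"
proof -
  have bij: "bij_betw f V W" and arcs: "\<And>u v l. u \<in> V \<Longrightarrow> v \<in> V \<Longrightarrow> E l u v \<longleftrightarrow> F l (f u) (f v)"
    using assms by (auto simp: labelled_iso_def)
  have "inv_into V f w \<in> V" "f (inv_into V f w) = w" if "w \<in> W" for w
    using bij that by (auto simp: bij_betw_def inv_into_into f_inv_into_f)
  then show ?thesis
    using bij_betw_inv_into[OF bij] arcs by (auto simp: labelled_iso_def)
qed

lemma labelled_iso_comp:
  assumes "labelled_iso V E W F f" and "labelled_iso W F X G g"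
  shows "labelled_iso V E X G (g \<circ> f)"
  using assms bij_betw_trans[of f V W g X] bij_betwE[of f V W]
  by (auto simp: labelled_iso_def)

lemma labelled_iso_unlabelled_arc:
  assumes "labelled_iso V E W F f" and "u \<in> V" and "v \<in> V"
  shows "unlabelled_arc W F (f u) (f v) \<longleftrightarrow> unlabelled_arc V E u v"
  using assms bij_betwE[of f V W] by (auto simp: labelled_iso_def unlabelled_arc_def)

lemma labelled_iso_rtranclp_imp:
  assumes "labelled_iso V E W F f" and "(unlabelled_arc V E)\<^sup>*\<^sup>* u v"
  shows "(unlabelled_arc W F)\<^sup>*\<^sup>* (f u) (f v)"
  using assms(2)
proof (induction rule: rtranclp_induct)
  case (step v w)
  then have "unlabelled_arc W F (f v) (f w)"
    using labelled_iso_unlabelled_arc[OF assms(1)] by (auto simp: unlabelled_arc_def)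
  with step.IH show ?case by simp
qed simp

lemma labelled_iso_rtranclp:
  assumes iso: "labelled_iso V E W F f" and "u \<in> V" and "v \<in> V"
  shows "(unlabelled_arc W F)\<^sup>*\<^sup>* (f u) (f v) \<longleftrightarrow> (unlabelled_arc V E)\<^sup>*\<^sup>* u v"
proof
  have "inv_into V f (f x) = x" if "x \<in> V" for x
    using iso that by (auto simp: labelled_iso_def bij_betw_def)
  then show "(unlabelled_arc V E)\<^sup>*\<^sup>* u v" if "(unlabelled_arc W F)\<^sup>*\<^sup>* (f u) (f v)"
    using labelled_iso_rtranclp_imp[OF labelled_iso_inv[OF iso] that] assms by simp
qed (rule labelled_iso_rtranclp_imp[OF iso])

lemma ex1_iff_card_eq_1: "(\<exists>!x. P x) \<longleftrightarrow> card {x. P x} = 1"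
proof -
  have "(\<exists>!x. P x) \<longleftrightarrow> (\<exists>x. {x. P x} = {x})" by (auto simp: set_eq_iff)
  then show ?thesis by (simp add: card_1_singleton_iff)
qed

lemma labelled_iso_unique_arc:
  assumes iso: "labelled_iso V E W F f" and u: "u \<in> V"
  shows "(\<exists>!w. unlabelled_arc W F (f u) w) \<longleftrightarrow> (\<exists>!v. unlabelled_arc V E u v)"
proof -
  have bij: "bij_betw f V W" using iso by (simp add: labelled_iso_def)
  let ?S = "{v. unlabelled_arc V E u v}"
  have "{w. unlabelled_arc W F (f u) w} = f ` ?S"
  proof (intro set_eqI iffI)
    fix w assume "w \<in> {w. unlabelled_arc W F (f u) w}"
    moreover from this obtain v where "v \<in> V" "w = f v"
      using bij by (auto simp: unlabelled_arc_def bij_betw_def)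
    ultimately show "w \<in> f ` ?S" using labelled_iso_unlabelled_arc[OF iso u] by auto
  qed (use labelled_iso_unlabelled_arc[OF iso u] in \<open>auto simp: unlabelled_arc_def\<close>)
  moreover have "inj_on f ?S"
    using bij by (auto simp: bij_betw_def unlabelled_arc_def intro: inj_on_subset)
  ultimately have "card {w. unlabelled_arc W F (f u) w} = card ?S" by (simp add: card_image)
  then show ?thesis unfolding ex1_iff_card_eq_1 by simp
qed

section \<open>Fences and their lattices of down-sets\<close>

text \<open>The fence on \<open>{1..M}\<close> oriented by \<open>b\<close> is the poset generated by \<open>q < q + 1\<close> if \<open>b q\<close>
  and \<open>q + 1 < q\<close> otherwise; \<open>fence_ideal b M\<close> characterises its down-sets.\<close>

definition fence_ideal :: "(nat \<Rightarrow> bool) \<Rightarrow> nat \<Rightarrow> nat set \<Rightarrow> bool" where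
  "fence_ideal b M I \<longleftrightarrow> I \<subseteq> {1..M} \<and> (\<forall>q. 1 \<le> q \<and> q < M \<longrightarrow>
     (Suc q \<in> I \<and> b q \<longrightarrow> q \<in> I) \<and> (q \<in> I \<and> \<not> b q \<longrightarrow> Suc q \<in> I))"

definition fence_down :: "(nat \<Rightarrow> bool) \<Rightarrow> nat \<Rightarrow> nat \<Rightarrow> nat set" where
  "fence_down b M p = {q. 1 \<le> q \<and> q \<le> M \<and>
     ((q \<le> p \<and> (\<forall>r. q \<le> r \<and> r < p \<longrightarrow> b r)) \<or> (p \<le> q \<and> (\<forall>r. p \<le> r \<and> r < q \<longrightarrow> \<not> b r)))}"

definition removable :: "(nat \<Rightarrow> bool) \<Rightarrow> nat \<Rightarrow> nat set \<Rightarrow> nat \<Rightarrow> bool" where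
  "removable b M I p \<longleftrightarrow> p \<in> I \<and> fence_ideal b M (I - {p})"

lemma fence_ideal_subset: "fence_ideal b M I \<Longrightarrow> I \<subseteq> {1..M}"
  by (simp add: fence_ideal_def)

lemma fence_idealD_pred: "fence_ideal b M I \<Longrightarrow> 1 \<le> q \<Longrightarrow> q < M \<Longrightarrow> Suc q \<in> I \<Longrightarrow> b q \<Longrightarrow> q \<in> I"
  by (simp add: fence_ideal_def)

lemma fence_idealD_succ: "fence_ideal b M I \<Longrightarrow> 1 \<le> q \<Longrightarrow> q < M \<Longrightarrow> q \<in> I \<Longrightarrow> \<not> b q \<Longrightarrow> Suc q \<in> I"
  by (simp add: fence_ideal_def)

lemma fence_down_self: "p \<in> {1..M} \<Longrightarrow> p \<in> fence_down b M p"
  by (auto simp: fence_down_def)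

lemma fence_ideal_fence_down: "fence_ideal b M (fence_down b M p)"
  unfolding fence_ideal_def fence_down_def
  by (auto simp: less_Suc_eq le_Suc_eq) (metis le_SucE le_antisym not_less_eq_eq)+

lemma fence_down_least:
  assumes I: "fence_ideal b M I" and "p \<in> I"
  shows "fence_down b M p \<subseteq> I"
proof
  fix q assume "q \<in> fence_down b M p"
  then have q: "1 \<le> q" "q \<le> M" and
    "(q \<le> p \<and> (\<forall>r. q \<le> r \<and> r < p \<longrightarrow> b r)) \<or> (p \<le> q \<and> (\<forall>r. p \<le> r \<and> r < q \<longrightarrow> \<not> b r))"
    by (auto simp: fence_down_def)
  have "p \<le> M" using assms fence_ideal_subset by force
  then consider "q \<le> p" "\<forall>r. q \<le> r \<and> r < p \<longrightarrow> b r" | "p \<le> q" "\<forall>r. p \<le> r \<and> r < q \<longrightarrow> \<not> b r"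
    using \<open>_ \<or> _\<close> by blast
  then show "q \<in> I"
  proof cases
    case 1
    from \<open>q \<le> p\<close> show ?thesis
    proof (induction rule: inc_induct)
      case (step r)
      then show ?case using 1 q \<open>p \<le> M\<close> fence_idealD_pred[OF I, of r] by auto
    qed (rule \<open>p \<in> I\<close>)
  next
    case 2
    from \<open>p \<le> q\<close> show ?thesis
    proof (induction rule: dec_induct)
      case (step r)
      have "1 \<le> r" using step.IH I fence_ideal_subset by force
      then show ?case using 2 q step fence_idealD_succ[OF I, of r] by auto
    qed (rule \<open>p \<in> I\<close>)
  qed
qed

lemma removable_iff:
  assumes I: "fence_ideal b M I"
  shows "removable b M I p \<longleftrightarrow> p \<in> I \<and> \<not> (p < M \<and> Suc p \<in> I \<and> b p) \<and>
     \<not> (\<exists>q. p = Suc q \<and> 1 \<le> q \<and> q \<in> I \<and> \<not> b q)"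
proof
  assume "removable b M I p"
  then have "p \<in> I" and J: "fence_ideal b M (I - {p})" by (auto simp: removable_def)
  moreover have "p \<in> {1..M}" using \<open>p \<in> I\<close> I fence_ideal_subset by blast
  moreover have "\<not> (\<exists>q. p = Suc q \<and> 1 \<le> q \<and> q \<in> I \<and> \<not> b q)"
  proof
    assume "\<exists>q. p = Suc q \<and> 1 \<le> q \<and> q \<in> I \<and> \<not> b q"
    then obtain q where "p = Suc q" "1 \<le> q" "q \<in> I - {p}" "\<not> b q" by auto
    then show False using fence_idealD_succ[OF J, of q] \<open>p \<in> {1..M}\<close> by auto
  qed
  ultimately show "p \<in> I \<and> \<not> (p < M \<and> Suc p \<in> I \<and> b p) \<and> \<not> (\<exists>q. p = Suc q \<and> 1 \<le> q \<and> q \<in> I \<and> \<not> b q)"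
    using fence_idealD_pred[OF J, of p] by auto
next
  assume p: "p \<in> I \<and> \<not> (p < M \<and> Suc p \<in> I \<and> b p) \<and> \<not> (\<exists>q. p = Suc q \<and> 1 \<le> q \<and> q \<in> I \<and> \<not> b q)"
  have "fence_ideal b M (I - {p})"
    unfolding fence_ideal_def
  proof (intro conjI allI impI)
    show "I - {p} \<subseteq> {1..M}" using I fence_ideal_subset by blast
  next
    fix q assume "1 \<le> q \<and> q < M" "Suc q \<in> I - {p} \<and> b q"
    then show "q \<in> I - {p}" using p fence_idealD_pred[OF I, of q] by auto
  next
    fix q assume "1 \<le> q \<and> q < M" "q \<in> I - {p} \<and> \<not> b q"
    then show "Suc q \<in> I - {p}" using p fence_idealD_succ[OF I, of q] by auto
  qed
  then show "removable b M I p" using p by (simp add: removable_def)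
qed

lemma removable_fence_down_iff:
  assumes "p \<in> {1..M}"
  shows "removable b M (fence_down b M p) q \<longleftrightarrow> q = p"
proof
  assume "removable b M (fence_down b M p) q"
  then have "q \<in> fence_down b M p" and up: "\<not> (q < M \<and> Suc q \<in> fence_down b M p \<and> b q)"
    and down: "\<not> (\<exists>r. q = Suc r \<and> 1 \<le> r \<and> r \<in> fence_down b M p \<and> \<not> b r)"
    using removable_iff[OF fence_ideal_fence_down] by blast+
  then consider "q \<le> p" "\<forall>r. q \<le> r \<and> r < p \<longrightarrow> b r" | "p \<le> q" "\<forall>r. p \<le> r \<and> r < q \<longrightarrow> \<not> b r"
    by (auto simp: fence_down_def)
  then show "q = p"
  proof cases
    case 1
    show ?thesis
    proof (rule ccontr)
      assume "q \<noteq> p"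
      then have "Suc q \<in> fence_down b M p" using 1 assms by (auto simp: fence_down_def)
      then show False using up 1 \<open>q \<noteq> p\<close> assms by auto
    qed
  next
    case 2
    show ?thesis
    proof (rule ccontr)
      assume "q \<noteq> p"
      then obtain r where "q = Suc r" "p \<le> r" using 2 by (cases q) auto
      then have "r \<in> fence_down b M p" using 2 \<open>q \<in> fence_down b M p\<close> assms
        by (auto simp: fence_down_def)
      then show False using down 2 \<open>q = Suc r\<close> \<open>p \<le> r\<close> assms by auto
    qed
  qed
next
  assume "q = p"
  then show "removable b M (fence_down b M p) q"
    using assms removable_iff[OF fence_ideal_fence_down] fence_down_self[OF assms]
    by (auto simp: fence_down_def)
qed

lemma inj_on_fence_down: "inj_on (fence_down b M) {1..M}"
  by (rule inj_onI) (metis removable_fence_down_iff)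

text \<open>Walk away from \<open>q\<close> along the fence as long as \<open>I\<close> forces it; the walk stops at a maximal element.\<close>

lemma exists_removable_above:
  assumes I: "fence_ideal b M I" and "q \<in> I"
  shows "\<exists>p. removable b M I p \<and> q \<in> fence_down b M p"
proof -
  have "\<exists>p'. removable b M I p' \<and> q \<in> fence_down b M p'"
    if "p \<in> I" "q \<in> fence_down b M p" for p
    using that
  proof (induction "M - ((p - q) + (q - p))" arbitrary: p rule: less_induct)
    case less
    have p: "1 \<le> p" "p \<le> M" using less.prems(1) I fence_ideal_subset by force+
    have q: "1 \<le> q" "q \<le> M" using less.prems(2) by (auto simp: fence_down_def)
    show ?case
    proof (cases "removable b M I p")
      case False
      then consider (up) "p < M" "Suc p \<in> I" "b p"
        | (down) r where "p = Suc r" "1 \<le> r" "r \<in> I" "\<not> b r"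
        using removable_iff[OF I] less.prems by blast
      then show ?thesis
      proof cases
        case up
        then have "q \<le> p" using less.prems(2) by (auto simp: fence_down_def)
        then have "q \<in> fence_down b M (Suc p)"
          using less.prems(2) up by (auto simp: fence_down_def less_Suc_eq)
        then show ?thesis using less.hyps[of "Suc p"] up \<open>q \<le> p\<close> q by auto
      next
        case down
        then have "p \<le> q" using less.prems(2) by (cases "q \<le> r") (auto simp: fence_down_def)
        have "\<not> b x" if "r \<le> x" "x < q" for x
          using that down less.prems(2) \<open>p \<le> q\<close> by (cases "x = r") (auto simp: fence_down_def)
        then have "q \<in> fence_down b M r"
          using q down \<open>p \<le> q\<close> by (auto simp: fence_down_def)
        then show ?thesis using less.hyps[of r] down \<open>p \<le> q\<close> q by auto
      qed
    qed (use less.prems in blast)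
  qed
  then show ?thesis using assms fence_ideal_subset fence_down_self by blast
qed

lemma fence_ideal_eq_fence_down:
  assumes I: "fence_ideal b M I" and p: "removable b M I p"
    and unique: "\<And>p'. removable b M I p' \<Longrightarrow> p' = p"
  shows "I = fence_down b M p"
proof
  show "fence_down b M p \<subseteq> I" using fence_down_least[OF I] p by (simp add: removable_def)
  show "I \<subseteq> fence_down b M p" using exists_removable_above[OF I] unique by blast
qed

definition ideal_cover :: "(nat \<Rightarrow> bool) \<Rightarrow> bool \<Rightarrow> nat set \<Rightarrow> nat set \<Rightarrow> bool" where
  "ideal_cover b l I J \<longleftrightarrow> (\<exists>p\<in>I. J = I - {p} \<and> b p = l)"

lemma unlabelled_ideal_cover_iff:
  "unlabelled_arc {I. fence_ideal b M I} (ideal_cover b) I J \<longleftrightarrow>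
     fence_ideal b M I \<and> (\<exists>p. removable b M I p \<and> J = I - {p})"
  by (auto simp: unlabelled_arc_def ideal_cover_def removable_def)

lemma subset_iff_rtranclp_ideal_cover:
  assumes "fence_ideal b M I" and "fence_ideal b M J"
  shows "J \<subseteq> I \<longleftrightarrow> (unlabelled_arc {I. fence_ideal b M I} (ideal_cover b))\<^sup>*\<^sup>* I J"
proof
  show "J \<subseteq> I" if "(unlabelled_arc {I. fence_ideal b M I} (ideal_cover b))\<^sup>*\<^sup>* I J"
    using that by (induction rule: rtranclp_induct) (auto simp: unlabelled_ideal_cover_iff)
next
  show "J \<subseteq> I \<Longrightarrow> (unlabelled_arc {I. fence_ideal b M I} (ideal_cover b))\<^sup>*\<^sup>* I J"
    using assms
  proof (induction "card (I - J)" arbitrary: I rule: less_induct)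
    case less
    show ?case
    proof (cases "I = J")
      case False
      then obtain q where "q \<in> I" "q \<notin> J" using less.prems by blast
      then obtain p where p: "removable b M I p" "q \<in> fence_down b M p"
        using exists_removable_above[OF less.prems(2)] by blast
      then have "p \<in> I" "p \<notin> J"
        using fence_down_least[OF less.prems(3)] \<open>q \<notin> J\<close> by (auto simp: removable_def)
      have "finite I" using fence_ideal_subset[OF less.prems(2)] finite_subset by blast
      then have "card (I - {p} - J) < card (I - J)"
        using \<open>p \<in> I\<close> \<open>p \<notin> J\<close> by (intro psubset_card_mono) auto
      moreover have "fence_ideal b M (I - {p})" using p by (simp add: removable_def)
      ultimately have "(unlabelled_arc {I. fence_ideal b M I} (ideal_cover b))\<^sup>*\<^sup>* (I - {p}) J"
        using less.hyps less.prems \<open>p \<notin> J\<close> by blast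
      moreover have "unlabelled_arc {I. fence_ideal b M I} (ideal_cover b) I (I - {p})"
        using p less.prems by (auto simp: unlabelled_ideal_cover_iff)
      ultimately show ?thesis by (meson converse_rtranclp_into_rtranclp)
    qed simp
  qed
qed

text \<open>The join-irreducible ideals are exactly the principal ones.\<close>

lemma unique_ideal_cover_iff:
  assumes I: "fence_ideal b M I"
  shows "(\<exists>!J. unlabelled_arc {I. fence_ideal b M I} (ideal_cover b) I J) \<longleftrightarrow>
    I \<in> fence_down b M ` {1..M}"
proof -
  have "{J. unlabelled_arc {I. fence_ideal b M I} (ideal_cover b) I J} =
      (\<lambda>p. I - {p}) ` {p. removable b M I p}"
    using I by (auto simp: unlabelled_ideal_cover_iff)
  moreover have "inj_on (\<lambda>p. I - {p}) {p. removable b M I p}"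
    by (auto simp: inj_on_def removable_def)
  ultimately have "(\<exists>!J. unlabelled_arc {I. fence_ideal b M I} (ideal_cover b) I J) \<longleftrightarrow>
      (\<exists>!p. removable b M I p)"
    unfolding ex1_iff_card_eq_1 by (simp add: card_image)
  also have "\<dots> \<longleftrightarrow> I \<in> fence_down b M ` {1..M}"
  proof
    assume "\<exists>!p. removable b M I p"
    then obtain p where p: "removable b M I p" and "\<And>p'. removable b M I p' \<Longrightarrow> p' = p" by blast
    then have "I = fence_down b M p" by (rule fence_ideal_eq_fence_down[OF I])
    moreover have "p \<in> {1..M}" using p fence_ideal_subset[OF I] by (auto simp: removable_def)
    ultimately show "I \<in> fence_down b M ` {1..M}" by blast
  qed (auto simp: removable_fence_down_iff)
  finally show ?thesis .
qed

lemma mem_fence_down_iff_subset: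
  "q \<in> {1..M} \<Longrightarrow> q \<in> fence_down b M p \<longleftrightarrow> fence_down b M q \<subseteq> fence_down b M p"
  using fence_down_least[OF fence_ideal_fence_down] fence_down_self by blast

section \<open>A fence is determined by its labelled lattice of ideals\<close>

lemma labelled_iso_principal_ideals:
  assumes iso: "labelled_iso {I. fence_ideal b M I} (ideal_cover b)
                  {I. fence_ideal b' M' I} (ideal_cover b') \<Psi>"
  shows "\<Psi> ` fence_down b M ` {1..M} = fence_down b' M' ` {1..M'}"
proof -
  let ?D = "fence_down b M ` {1..M}" and ?D' = "fence_down b' M' ` {1..M'}"
  have bij: "bij_betw \<Psi> {I. fence_ideal b M I} {I. fence_ideal b' M' I}"
    using iso by (simp add: labelled_iso_def)
  have D_iff: "I \<in> ?D \<longleftrightarrow> \<Psi> I \<in> ?D'" if I: "fence_ideal b M I" for I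
  proof -
    have "fence_ideal b' M' (\<Psi> I)" using bij I by (auto dest: bij_betwE)
    have "I \<in> ?D \<longleftrightarrow> (\<exists>!J. unlabelled_arc {I. fence_ideal b M I} (ideal_cover b) I J)"
      using unique_ideal_cover_iff[OF I] by (rule sym)
    also have "\<dots> \<longleftrightarrow> (\<exists>!J. unlabelled_arc {I. fence_ideal b' M' I} (ideal_cover b') (\<Psi> I) J)"
      using labelled_iso_unique_arc[OF iso] I by (simp only: mem_Collect_eq)
    also have "\<dots> \<longleftrightarrow> \<Psi> I \<in> ?D'"
      by (rule unique_ideal_cover_iff) fact
    finally show ?thesis .
  qed
  show ?thesis
  proof
    show "\<Psi> ` ?D \<subseteq> ?D'"
    proof (rule image_subsetI)
      fix I assume "I \<in> ?D"
      then show "\<Psi> I \<in> ?D'" using D_iff[of I] fence_ideal_fence_down by blast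
    qed
    show "?D' \<subseteq> \<Psi> ` ?D"
    proof
      fix J assume "J \<in> ?D'"
      then have "J \<in> \<Psi> ` {I. fence_ideal b M I}"
        using bij fence_ideal_fence_down by (auto simp: bij_betw_def)
      then obtain I where "fence_ideal b M I" "J = \<Psi> I" by blast
      then have "I \<in> ?D" using D_iff[of I] \<open>J \<in> ?D'\<close> by simp
      then show "J \<in> \<Psi> ` ?D" using \<open>J = \<Psi> I\<close> by (rule rev_image_eqI)
    qed
  qed
qed

lemma fence_iso_points:
  assumes iso: "labelled_iso {I. fence_ideal b M I} (ideal_cover b)
                  {I. fence_ideal b' M' I} (ideal_cover b') \<Psi>"
  obtains \<sigma> where "bij_betw \<sigma> {1..M} {1..M'}"
    and "\<And>p. p \<in> {1..M} \<Longrightarrow> \<Psi> (fence_down b M p) = fence_down b' M' (\<sigma> p)"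
proof -
  let ?D = "fence_down b M ` {1..M}" and ?D' = "fence_down b' M' ` {1..M'}"
  let ?\<sigma> = "the_inv_into {1..M'} (fence_down b' M') \<circ> \<Psi> \<circ> fence_down b M"
  have image: "\<Psi> ` ?D = ?D'" by (rule labelled_iso_principal_ideals[OF iso])
  then have "bij_betw \<Psi> ?D ?D'"
    using iso fence_ideal_fence_down by (auto simp: labelled_iso_def intro: bij_betw_subset)
  moreover have "bij_betw (fence_down b M) {1..M} ?D" "bij_betw (fence_down b' M') {1..M'} ?D'"
    using inj_on_fence_down by (auto simp: bij_betw_def)
  ultimately have "bij_betw ?\<sigma> {1..M} {1..M'}"
    by (meson bij_betw_the_inv_into bij_betw_trans)
  moreover have "\<Psi> (fence_down b M p) = fence_down b' M' (?\<sigma> p)" if "p \<in> {1..M}" for p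
  proof -
    have "\<Psi> (fence_down b M p) \<in> ?D'" using image that by blast
    then show ?thesis using f_the_inv_into_f[OF inj_on_fence_down] by simp
  qed
  ultimately show ?thesis using that by blast
qed

definition fence_hasse_edge :: "(nat \<Rightarrow> bool) \<Rightarrow> nat \<Rightarrow> nat \<Rightarrow> nat \<Rightarrow> bool" where
  "fence_hasse_edge b M p q \<longleftrightarrow> p \<noteq> q \<and> (q \<in> fence_down b M p \<or> p \<in> fence_down b M q) \<and>
     \<not> (\<exists>r\<in>{1..M}. r \<noteq> p \<and> r \<noteq> q \<and>
          (q \<in> fence_down b M r \<and> r \<in> fence_down b M p \<or> p \<in> fence_down b M r \<and> r \<in> fence_down b M q))"

lemma fence_hasse_edge_iff:
  assumes "p \<in> {1..M}" and "q \<in> {1..M}"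
  shows "fence_hasse_edge b M p q \<longleftrightarrow> q = Suc p \<or> p = Suc q"
proof
  have between: "\<exists>r\<in>{1..M}. r \<noteq> x \<and> r \<noteq> y \<and> y \<in> fence_down b M r \<and> r \<in> fence_down b M x"
    if "y \<in> fence_down b M x" "x \<in> {1..M}" "x \<noteq> y" "y \<noteq> Suc x" "x \<noteq> Suc y" for x y
  proof (cases "y < x")
    case True
    then show ?thesis using that by (intro bexI[of _ "Suc y"]) (auto simp: fence_down_def)
  next
    case False
    then have "Suc x < y" using that by auto
    then obtain r where "y = Suc r" "x < r" by (cases y) auto
    then show ?thesis using that by (intro bexI[of _ r]) (auto simp: fence_down_def)
  qed
  show "q = Suc p \<or> p = Suc q" if "fence_hasse_edge b M p q"
    using that between[of q p] between[of p q] assms unfolding fence_hasse_edge_def by metis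
next
  assume "q = Suc p \<or> p = Suc q"
  then show "fence_hasse_edge b M p q"
    using assms unfolding fence_hasse_edge_def fence_down_def
    by (auto simp: less_Suc_eq)
qed

lemma path_automorphism_fixing_1:
  assumes bij: "bij_betw \<sigma> {1..M} {1..M}"
    and adj: "\<And>p q. p \<in> {1..M} \<Longrightarrow> q \<in> {1..M} \<Longrightarrow>
       (\<sigma> q = Suc (\<sigma> p) \<or> \<sigma> p = Suc (\<sigma> q)) \<longleftrightarrow> (q = Suc p \<or> p = Suc q)"
    and "\<sigma> 1 = 1"
  shows "p \<in> {1..M} \<Longrightarrow> \<sigma> p = p"
proof (induction p rule: less_induct)
  case (less p)
  show ?case
  proof (cases "p = 1")
    case False
    then obtain r where r: "p = Suc r" "r \<in> {1..M}" using less.prems by (cases p) auto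
    then have "\<sigma> r = r" using less.IH by simp
    moreover have "\<sigma> p = Suc (\<sigma> r) \<or> \<sigma> r = Suc (\<sigma> p)" using adj[OF r(2) less.prems] r by simp
    moreover have "\<sigma> r \<noteq> Suc (\<sigma> p)"
    proof
      assume "\<sigma> r = Suc (\<sigma> p)"
      moreover have "\<sigma> p \<in> {1..M}" using bij less.prems bij_betwE by blast
      ultimately obtain s where s: "r = Suc s" "s \<in> {1..M}" using \<open>\<sigma> r = r\<close> r by (cases r) auto
      then have "\<sigma> s = \<sigma> p" using less.IH[of s] \<open>\<sigma> r = r\<close> \<open>\<sigma> r = Suc (\<sigma> p)\<close> r by simp
      then show False using bij s r less.prems by (auto simp: bij_betw_def dest: inj_onD)
    qed
    ultimately show ?thesis using r by simp
  qed (use assms in simp)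
qed

lemma path_automorphism_end:
  assumes bij: "bij_betw \<sigma> {1..M} {1..M}"
    and adj: "\<And>p q. p \<in> {1..M} \<Longrightarrow> q \<in> {1..M} \<Longrightarrow>
       (\<sigma> q = Suc (\<sigma> p) \<or> \<sigma> p = Suc (\<sigma> q)) \<longleftrightarrow> (q = Suc p \<or> p = Suc q)"
    and "1 \<le> M"
  shows "\<sigma> 1 = 1 \<or> \<sigma> 1 = M"
proof (rule ccontr)
  assume *: "\<not> (\<sigma> 1 = 1 \<or> \<sigma> 1 = M)"
  have one: "1 \<in> {1..M}" using \<open>1 \<le> M\<close> by simp
  then have s1: "\<sigma> 1 \<in> {1..M}" using bij bij_betwE by blast
  then have "\<sigma> 1 - 1 \<in> \<sigma> ` {1..M}" "Suc (\<sigma> 1) \<in> \<sigma> ` {1..M}"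
    using * bij_betw_imp_surj_on[OF bij] by auto
  then obtain a c where a: "a \<in> {1..M}" "\<sigma> a = \<sigma> 1 - 1" and c: "c \<in> {1..M}" "\<sigma> c = Suc (\<sigma> 1)"
    by (metis imageE)
  have "a = 2" using adj[OF one a(1)] a * s1 by auto
  moreover have "c = 2" using adj[OF one c(1)] c by auto
  ultimately show False using a c by simp
qed

text \<open>The Hasse diagram of a fence is the path \<open>1 - 2 - \<dots> - M\<close>, which has only two automorphisms.\<close>

lemma path_isomorphism_cases:
  assumes bij: "bij_betw \<sigma> {1..M} {1..M'}"
    and adj: "\<And>p q. p \<in> {1..M} \<Longrightarrow> q \<in> {1..M} \<Longrightarrow>
       (\<sigma> q = Suc (\<sigma> p) \<or> \<sigma> p = Suc (\<sigma> q)) \<longleftrightarrow> (q = Suc p \<or> p = Suc q)"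
    and "1 \<le> M"
  shows "M' = M" and "(\<forall>p\<in>{1..M}. \<sigma> p = p) \<or> (\<forall>p\<in>{1..M}. \<sigma> p = Suc M - p)"
proof -
  show "M' = M" using bij_betw_same_card[OF bij] by simp
  with bij have bij': "bij_betw \<sigma> {1..M} {1..M}" by simp
  have "\<sigma> 1 = 1 \<or> \<sigma> 1 = M" by (rule path_automorphism_end[OF bij' adj \<open>1 \<le> M\<close>])
  then show "(\<forall>p\<in>{1..M}. \<sigma> p = p) \<or> (\<forall>p\<in>{1..M}. \<sigma> p = Suc M - p)"
  proof
    assume "\<sigma> 1 = 1"
    then show ?thesis using path_automorphism_fixing_1[OF bij' adj] by blast
  next
    assume "\<sigma> 1 = M"
    define \<tau> where "\<tau> = (\<lambda>x. Suc M - x) \<circ> \<sigma>"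
    have range: "\<sigma> x \<in> {1..M}" if "x \<in> {1..M}" for x using bij' that bij_betwE by blast
    have "bij_betw (\<lambda>x. Suc M - x) {1..M} {1..M}"
      by (rule bij_betw_byWitness[where f' = "\<lambda>x. Suc M - x"]) auto
    then have "bij_betw \<tau> {1..M} {1..M}" unfolding \<tau>_def by (rule bij_betw_trans[OF bij'])
    moreover have "(\<tau> q = Suc (\<tau> p) \<or> \<tau> p = Suc (\<tau> q)) \<longleftrightarrow> (q = Suc p \<or> p = Suc q)"
      if "p \<in> {1..M}" "q \<in> {1..M}" for p q
      using adj[OF that] range[OF that(1)] range[OF that(2)] unfolding \<tau>_def by auto
    moreover have "\<tau> 1 = 1" using \<open>\<sigma> 1 = M\<close> by (simp add: \<tau>_def)
    ultimately have "\<tau> p = p" if "p \<in> {1..M}" for p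
      using path_automorphism_fixing_1 that by blast
    then show ?thesis using range unfolding \<tau>_def by fastforce
  qed
qed

context
  fixes b b' :: "nat \<Rightarrow> bool" and M M' :: nat and \<Psi> :: "nat set \<Rightarrow> nat set" and \<sigma> :: "nat \<Rightarrow> nat"
  assumes iso: "labelled_iso {I. fence_ideal b M I} (ideal_cover b)
                  {I. fence_ideal b' M' I} (ideal_cover b') \<Psi>"
    and \<sigma>_bij: "bij_betw \<sigma> {1..M} {1..M'}"
    and \<Psi>_fence_down: "\<And>p. p \<in> {1..M} \<Longrightarrow> \<Psi> (fence_down b M p) = fence_down b' M' (\<sigma> p)"
begin

lemma \<sigma>_range: "p \<in> {1..M} \<Longrightarrow> \<sigma> p \<in> {1..M'}"
  using \<sigma>_bij bij_betwE by blast

lemma fence_iso_label: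
  assumes p: "p \<in> {1..M}"
  shows "b' (\<sigma> p) = b p"
proof -
  have "removable b M (fence_down b M p) p" using removable_fence_down_iff[OF p] by simp
  then have ideal: "fence_ideal b M (fence_down b M p - {p})"
    and "ideal_cover b (b p) (fence_down b M p) (fence_down b M p - {p})"
    by (auto simp: removable_def ideal_cover_def)
  then have "ideal_cover b' (b p) (fence_down b' M' (\<sigma> p)) (\<Psi> (fence_down b M p - {p}))"
    using iso fence_ideal_fence_down \<Psi>_fence_down[OF p] by (auto simp: labelled_iso_def)
  then obtain p' where p': "p' \<in> fence_down b' M' (\<sigma> p)" "b' p' = b p"
    and eq: "\<Psi> (fence_down b M p - {p}) = fence_down b' M' (\<sigma> p) - {p'}"
    by (auto simp: ideal_cover_def)
  have "fence_ideal b' M' (\<Psi> (fence_down b M p - {p}))"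
    using iso ideal by (auto simp: labelled_iso_def dest: bij_betwE)
  then have "removable b' M' (fence_down b' M' (\<sigma> p)) p'" using p' eq by (simp add: removable_def)
  then show ?thesis using removable_fence_down_iff[OF \<sigma>_range[OF p]] p' by simp
qed

lemma fence_iso_order:
  assumes p: "p \<in> {1..M}" and q: "q \<in> {1..M}"
  shows "\<sigma> q \<in> fence_down b' M' (\<sigma> p) \<longleftrightarrow> q \<in> fence_down b M p"
proof -
  let ?R = "unlabelled_arc {I. fence_ideal b M I} (ideal_cover b)"
  let ?R' = "unlabelled_arc {I. fence_ideal b' M' I} (ideal_cover b')"
  have "\<sigma> q \<in> fence_down b' M' (\<sigma> p) \<longleftrightarrow> fence_down b' M' (\<sigma> q) \<subseteq> fence_down b' M' (\<sigma> p)"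
    using mem_fence_down_iff_subset \<sigma>_range[OF q] by blast
  also have "\<dots> \<longleftrightarrow> ?R'\<^sup>*\<^sup>* (\<Psi> (fence_down b M p)) (\<Psi> (fence_down b M q))"
    using subset_iff_rtranclp_ideal_cover fence_ideal_fence_down \<Psi>_fence_down p q by metis
  also have "\<dots> \<longleftrightarrow> ?R\<^sup>*\<^sup>* (fence_down b M p) (fence_down b M q)"
    using labelled_iso_rtranclp[OF iso] fence_ideal_fence_down by blast
  also have "\<dots> \<longleftrightarrow> q \<in> fence_down b M p"
    using subset_iff_rtranclp_ideal_cover fence_ideal_fence_down mem_fence_down_iff_subset q by metis
  finally show ?thesis .
qed

lemma fence_iso_hasse_edge:
  assumes p: "p \<in> {1..M}" and q: "q \<in> {1..M}"
  shows "fence_hasse_edge b' M' (\<sigma> p) (\<sigma> q) \<longleftrightarrow> fence_hasse_edge b M p q"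
proof -
  have ex: "(\<exists>r\<in>{1..M'}. P r) \<longleftrightarrow> (\<exists>r\<in>{1..M}. P (\<sigma> r))" for P
    unfolding bij_betw_imp_surj_on[OF \<sigma>_bij, symmetric] by blast
  have inj: "\<sigma> x = \<sigma> y \<longleftrightarrow> x = y" if "x \<in> {1..M}" "y \<in> {1..M}" for x y
    using \<sigma>_bij that by (auto simp: bij_betw_def dest: inj_onD)
  show ?thesis
    unfolding fence_hasse_edge_def ex using p q inj fence_iso_order by (auto 0 3)
qed

lemma fence_iso_reversal_alternating:
  assumes rev: "\<And>p. p \<in> {1..M} \<Longrightarrow> \<sigma> p = Suc M - p" and "M' = M" and "1 \<le> p" and "p < M"
  shows "b p \<longleftrightarrow> \<not> b (Suc p)"
proof -
  have "b p \<longleftrightarrow> p \<in> fence_down b M (Suc p)" using assms by (auto simp: fence_down_def less_Suc_eq)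
  also have "\<dots> \<longleftrightarrow> Suc M - p \<in> fence_down b' M' (M - p)"
    using fence_iso_order[of "Suc p" p] rev[of p] rev[of "Suc p"] assms by auto
  also have "\<dots> \<longleftrightarrow> \<not> b' (M - p)"
    using assms by (auto simp: fence_down_def less_Suc_eq Suc_diff_le)
  also have "b' (M - p) \<longleftrightarrow> b (Suc p)" using fence_iso_label[of "Suc p"] rev[of "Suc p"] assms by auto
  finally show ?thesis .
qed

lemma fence_iso_reversal:
  assumes rev: "\<And>p. p \<in> {1..M} \<Longrightarrow> \<sigma> p = Suc M - p" and "M' = M" and "b M" and "b' M"
  shows "p \<in> {1..M} \<Longrightarrow> b' p = b p"
proof -
  have parity: "b p \<longleftrightarrow> even (M - p)" if "p \<in> {1..M}" for p
  proof -
    from that have "p \<le> M" "1 \<le> p" by auto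
    then show ?thesis
    proof (induction rule: inc_induct)
      case (step p)
      then show ?case
        using fence_iso_reversal_alternating[OF rev \<open>M' = M\<close>, of p] by (simp add: Suc_diff_Suc)
    qed (use \<open>b M\<close> in simp)
  qed
  show "b' p = b p" if p: "p \<in> {1..M}"
  proof -
    have one: "1 \<in> {1..M}" using p by simp
    then have "b 1" using fence_iso_label[of 1] rev[of 1] \<open>b' M\<close> by simp
    then have "even (M - 1)" using parity[OF one] by simp
    have q: "Suc M - p \<in> {1..M}" using p by auto
    have "b' p = b (Suc M - p)" using fence_iso_label[OF q] rev[OF q] p by auto
    also have "\<dots> \<longleftrightarrow> even (p - 1)"
      using parity[OF q] p by (simp only: diff_diff_right Suc_diff_le) simp
    also have "\<dots> \<longleftrightarrow> even (M - p)"
    proof -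
      have "p - 1 + (M - p) = M - 1" using p by auto
      then show ?thesis using \<open>even (M - 1)\<close> even_add[of "p - 1" "M - p"] by metis
    qed
    finally show ?thesis using parity[OF p] by simp
  qed
qed

lemma fence_iso_eq:
  assumes "1 \<le> M" and "b M" and "b' M'"
  shows "M' = M \<and> (\<forall>p\<in>{1..M}. b' p = b p)"
proof -
  have adj: "(\<sigma> q = Suc (\<sigma> p) \<or> \<sigma> p = Suc (\<sigma> q)) \<longleftrightarrow> (q = Suc p \<or> p = Suc q)"
    if "p \<in> {1..M}" "q \<in> {1..M}" for p q
    using fence_hasse_edge_iff[OF \<sigma>_range \<sigma>_range, OF that] fence_hasse_edge_iff[OF that]
      fence_iso_hasse_edge[OF that] by blast
  note cases = path_isomorphism_cases[OF \<sigma>_bij adj \<open>1 \<le> M\<close>]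
  show ?thesis
    using cases(2) fence_iso_label fence_iso_reversal[OF _ cases(1)] \<open>b M\<close> \<open>b' M'\<close> cases(1) by auto
qed

end

theorem fence_ideals_iso_eq:
  assumes iso: "labelled_iso {I. fence_ideal b M I} (ideal_cover b)
                  {I. fence_ideal b' M' I} (ideal_cover b') \<Psi>"
    and "1 \<le> M" and "b M" and "b' M'"
  shows "M' = M \<and> (\<forall>p\<in>{1..M}. b' p = b p)"
proof -
  obtain \<sigma> where "bij_betw \<sigma> {1..M} {1..M'}"
    and "\<And>p. p \<in> {1..M} \<Longrightarrow> \<Psi> (fence_down b M p) = fence_down b' M' (\<sigma> p)"
    using fence_iso_points[OF iso] by blast
  from fence_iso_eq[OF iso this assms(2-4)] show ?thesis .
qed

section \<open>Digits and carries of hyperbinary expansions\<close>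

text \<open>Digit positions are counted from the least significant end: \<open>digit w j\<close> is the coefficient
  of \<open>2 ^ j\<close>, and \<open>high_part w j\<close> is the value of \<open>w\<close> with its last \<open>j\<close> digits deleted.\<close>

definition digit :: "nat list \<Rightarrow> nat \<Rightarrow> nat" where
  "digit w j = (if j < length w then w ! (length w - Suc j) else 0)"

definition high_part :: "nat list \<Rightarrow> nat \<Rightarrow> nat" where
  "high_part w j = hval (take (length w - j) w)"

lemma hval_append: "hval (xs @ ys) = 2 ^ length ys * hval xs + hval ys"
proof -
  have "foldl (\<lambda>a d. 2 * a + d) c ys = 2 ^ length ys * c + foldl (\<lambda>a d. 2 * a + d) 0 ys" for c
    by (induction ys rule: rev_induct) (simp_all add: algebra_simps)
  then show ?thesis unfolding hval.simps foldl_append .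
qed

lemma hval_Nil [simp]: "hval [] = 0"
  by simp

lemma hval_Cons [simp]: "hval (d # xs) = 2 ^ length xs * d + hval xs"
  using hval_append[of "[d]" xs] by simp

lemma hval_snoc: "hval (xs @ [d]) = 2 * hval xs + d"
  using hval_append[of xs "[d]"] by simp

declare hval.simps [simp del]

lemma high_part_0: "high_part w 0 = hval w"
  by (simp add: high_part_def)

lemma high_part_Suc: "high_part w j = digit w j + 2 * high_part w (Suc j)"
proof (cases "j < length w")
  case True
  then have "length w - j = Suc (length w - Suc j)" by simp
  then have "take (length w - j) w = take (length w - Suc j) w @ [w ! (length w - Suc j)]"
    using True by (simp add: take_Suc_conv_app_nth)
  then show ?thesis using True by (simp add: high_part_def digit_def hval_snoc)
qed (simp add: high_part_def digit_def)

lemma high_part_Cons_0: "high_part (0 # w) = high_part w"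
proof
  fix j
  show "high_part (0 # w) j = high_part w j"
    by (cases "j \<le> length w") (simp_all add: high_part_def Suc_diff_le hval_Cons)
qed

lemma high_part_rewrite:
  "high_part (x @ [Suc a, 0] @ y) j = high_part (x @ [a, 2] @ y) j + of_bool (j = Suc (length y))"
proof -
  consider "j \<le> length y" | "j = Suc (length y)" | "Suc (Suc (length y)) \<le> j" by linarith
  then show ?thesis
  proof cases
    case 1
    then have "take (length (x @ [c, d] @ y) - j) (x @ [c, d] @ y) = x @ [c, d] @ take (length y - j) y"
      for c d :: nat by (simp add: Suc_diff_le)
    then show ?thesis using 1 by (simp add: high_part_def hval_append hval_snoc)
  next
    case 2
    then have "take (length (x @ [c, d] @ y) - j) (x @ [c, d] @ y) = x @ [c]" for c d :: nat by simp
    then show ?thesis using 2 by (simp add: high_part_def hval_snoc)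
  next
    case 3
    then have "take (length (x @ [c, d] @ y) - j) (x @ [c, d] @ y) = take (length x + 2 + length y - j) x"
      for c d :: nat by simp
    then show ?thesis using 3 by (simp add: high_part_def)
  qed
qed

lemma hyperbinary_digits: "w \<in> hyperbinary n \<Longrightarrow> set w \<subseteq> {0, 1, 2}"
  by (simp add: hyperbinary_def)

lemma hval_hyperbinary: "w \<in> hyperbinary n \<Longrightarrow> hval w = n"
  by (simp add: hyperbinary_def)

lemma digit_le_2:
  assumes "w \<in> hyperbinary n"
  shows "digit w j \<le> 2"
proof (cases "j < length w")
  case True
  then have "w ! (length w - Suc j) \<in> set w" by simp
  then have "w ! (length w - Suc j) \<in> {0, 1, 2}" using hyperbinary_digits[OF assms] by blast
  then show ?thesis using True by (auto simp: digit_def)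
qed (simp add: digit_def)

lemma digit_top: "w \<in> hyperbinary n \<Longrightarrow> w \<noteq> [] \<Longrightarrow> digit w (length w - 1) \<noteq> 0"
  by (simp add: digit_def hyperbinary_def hd_conv_nth)

lemma hval_bound: "set ys \<subseteq> {0, 1, 2} \<Longrightarrow> hval ys + 2 \<le> 2 ^ Suc (length ys)"
  by (induction ys rule: rev_induct) (auto simp: hval_Nil hval_snoc)

lemma high_part_le_div: "w \<in> hyperbinary n \<Longrightarrow> high_part w j \<le> n div 2 ^ j"
  and div_le_high_part: "w \<in> hyperbinary n \<Longrightarrow> n div 2 ^ j \<le> high_part w j + 1"
proof -
  assume w: "w \<in> hyperbinary n"
  let ?k = "length w - j"
  have n: "n = 2 ^ length (drop ?k w) * high_part w j + hval (drop ?k w)"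
    using hval_append[of "take ?k w" "drop ?k w"] hval_hyperbinary[OF w] by (simp add: high_part_def)
  have low: "hval (drop ?k w) + 2 \<le> 2 ^ Suc (length (drop ?k w))"
    using hyperbinary_digits[OF w] by (intro hval_bound) (meson in_set_dropD subset_iff)
  have "high_part w j \<le> n div 2 ^ j \<and> n div 2 ^ j \<le> high_part w j + 1"
  proof (cases "j \<le> length w")
    case True
    then have "n = 2 ^ j * high_part w j + hval (drop ?k w)" "hval (drop ?k w) + 2 \<le> 2 * 2 ^ j"
      using n low by simp_all
    then have "high_part w j * 2 ^ j \<le> n" "n < (high_part w j + 2) * 2 ^ j"
      by (simp_all add: algebra_simps)
    moreover have "(0::nat) < 2 ^ j" by simp
    ultimately have "high_part w j \<le> n div 2 ^ j" "n div 2 ^ j < high_part w j + 2"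
      using less_eq_div_iff_mult_less_eq div_less_iff_less_mult by blast+
    then show ?thesis by simp
  next
    case False
    then have "n + 2 \<le> 2 ^ Suc (length w)" "high_part w j = 0"
      using n low by (simp_all add: high_part_def)
    moreover have "(2::nat) ^ Suc (length w) \<le> 2 ^ j" using False by (intro power_increasing) auto
    ultimately show ?thesis by simp
  qed
  then show "high_part w j \<le> n div 2 ^ j" "n div 2 ^ j \<le> high_part w j + 1" by simp_all
qed

lemma hyperbinary_eqI:
  assumes u: "u \<in> hyperbinary m" and v: "v \<in> hyperbinary n"
    and high: "\<And>j. high_part u j = high_part v j"
  shows "u = v"
proof -
  have digits: "digit u j = digit v j" for j
    using high_part_Suc[of u j] high_part_Suc[of v j] high[of j] high[of "Suc j"] by simp
  have "length u = length v"
  proof (rule ccontr)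
    assume "length u \<noteq> length v"
    then consider "length u < length v" | "length v < length u" by linarith
    then show False
    proof cases
      case 1
      then have "digit u (length v - 1) = 0" by (auto simp: digit_def)
      moreover have "v \<noteq> []" using 1 by auto
      ultimately show False using digit_top[OF v] digits[of "length v - 1"] by simp
    next
      case 2
      then have "digit v (length u - 1) = 0" by (auto simp: digit_def)
      moreover have "u \<noteq> []" using 2 by auto
      ultimately show False using digit_top[OF u] digits[of "length u - 1"] by simp
    qed
  qed
  moreover have "u ! k = v ! k" if "k < length u" for k
  proof -
    have "length v - Suc (length v - Suc k) = k" "length v - Suc k < length v"
      using that \<open>length u = length v\<close> by auto
    then show ?thesis using digits[of "length v - Suc k"] \<open>length u = length v\<close>
      by (simp add: digit_def)
  qed
  ultimately show ?thesis by (rule nth_equalityI)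
qed

text \<open>Reading \<open>w\<close> from the least significant end, \<open>j \<in> carry_set n w\<close> iff a carry is passed into
  position \<open>j\<close> when the digits of \<open>w\<close> are added up to the binary expansion of \<open>n\<close>.\<close>

definition carry_set :: "nat \<Rightarrow> nat list \<Rightarrow> nat set" where
  "carry_set n w = {j. high_part w j < n div 2 ^ j}"

lemma div_eq_high_part_plus_carry:
  "w \<in> hyperbinary n \<Longrightarrow> n div 2 ^ j = high_part w j + of_bool (j \<in> carry_set n w)"
  using high_part_le_div[of w n j] div_le_high_part[of w n j] by (auto simp: carry_set_def)

lemma div_power_eq_bit_plus_div_power_Suc:
  "(n::nat) div 2 ^ j = of_bool (bit n j) + 2 * (n div 2 ^ Suc j)"
proof -
  have "n div 2 ^ Suc j = n div 2 ^ j div 2" by (simp only: power_Suc2 div_mult2_eq)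
  then show ?thesis by (simp add: bit_iff_odd of_bool_odd_eq_mod_2)
qed

lemma digit_plus_carry:
  assumes "w \<in> hyperbinary n"
  shows "digit w j + of_bool (j \<in> carry_set n w) =
    of_bool (bit n j) + 2 * of_bool (Suc j \<in> carry_set n w)"
  using high_part_Suc[of w j] div_eq_high_part_plus_carry[OF assms, of j]
    div_eq_high_part_plus_carry[OF assms, of "Suc j"] div_power_eq_bit_plus_div_power_Suc[of n j]
  by linarith

lemma carry_set_fence_ideal:
  assumes w: "w \<in> hyperbinary n" and n: "n < 2 ^ Suc M"
  shows "fence_ideal (bit n) M (carry_set n w)"
  unfolding fence_ideal_def
proof (intro conjI allI impI)
  show "carry_set n w \<subseteq> {1..M}"
  proof
    fix j assume j: "j \<in> carry_set n w"
    have "j \<noteq> 0" using j hval_hyperbinary[OF w] by (cases j) (auto simp: carry_set_def high_part_0)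
    moreover have "j \<le> M"
    proof (rule ccontr)
      assume "\<not> j \<le> M"
      then have "(2::nat) ^ Suc M \<le> 2 ^ j" by (intro power_increasing) auto
      then show False using j n by (auto simp: carry_set_def)
    qed
    ultimately show "j \<in> {1..M}" by simp
  qed
next
  fix q assume "1 \<le> q \<and> q < M" "Suc q \<in> carry_set n w \<and> bit n q"
  then show "q \<in> carry_set n w" using digit_plus_carry[OF w, of q] digit_le_2[OF w, of q]
    by (cases "q \<in> carry_set n w") simp_all
next
  fix q assume "1 \<le> q \<and> q < M" "q \<in> carry_set n w \<and> \<not> bit n q"
  then show "Suc q \<in> carry_set n w" using digit_plus_carry[OF w, of q]
    by (cases "Suc q \<in> carry_set n w") auto
qed

lemma inj_on_carry_set: "inj_on (carry_set n) (hyperbinary n)"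
proof (rule inj_onI)
  fix u v assume u: "u \<in> hyperbinary n" and v: "v \<in> hyperbinary n"
    and "carry_set n u = carry_set n v"
  then have "high_part u j = high_part v j" for j
    using div_eq_high_part_plus_carry[OF u, of j] div_eq_high_part_plus_carry[OF v, of j] by simp
  then show "u = v" using hyperbinary_eqI[OF u v] by blast
qed

lemma carry_set_remove_iff:
  assumes u: "u \<in> hyperbinary n" and v: "v \<in> hyperbinary n"
  shows "p \<in> carry_set n u \<and> carry_set n v = carry_set n u - {p} \<longleftrightarrow>
    (\<forall>j. high_part v j = high_part u j + of_bool (j = p))"
proof -
  have eq: "high_part u j + of_bool (j \<in> carry_set n u) = high_part v j + of_bool (j \<in> carry_set n v)"
    for j using div_eq_high_part_plus_carry[OF u, of j] div_eq_high_part_plus_carry[OF v, of j] by simp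
  show ?thesis
  proof
    assume removed: "p \<in> carry_set n u \<and> carry_set n v = carry_set n u - {p}"
    show "\<forall>j. high_part v j = high_part u j + of_bool (j = p)"
    proof
      fix j
      show "high_part v j = high_part u j + of_bool (j = p)"
      proof (cases "j = p")
        case False
        then have "j \<in> carry_set n v \<longleftrightarrow> j \<in> carry_set n u" using removed by blast
        then show ?thesis using eq[of j] False by simp
      qed (use eq[of j] removed in simp)
    qed
  next
    assume high: "\<forall>j. high_part v j = high_part u j + of_bool (j = p)"
    then have "p \<in> carry_set n u" "p \<notin> carry_set n v" using eq[of p] by (auto simp: of_bool_def split: if_splits)
    moreover have "j \<in> carry_set n v \<longleftrightarrow> j \<in> carry_set n u - {p}" for j
      using eq[of j] high \<open>p \<notin> carry_set n v\<close> by (cases "j = p") (auto simp: of_bool_def split: if_splits)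
    ultimately show "p \<in> carry_set n u \<and> carry_set n v = carry_set n u - {p}" by blast
  qed
qed

lemma div_power_eq_1:
  assumes "2 ^ M \<le> n" and "n < 2 ^ Suc M"
  shows "n div 2 ^ M = (1::nat)"
proof -
  have "1 \<le> n div 2 ^ M" using assms(1) by (simp add: less_eq_div_iff_mult_less_eq)
  moreover have "n div 2 ^ M < 2" using assms(2) by (simp add: div_less_iff_less_mult mult.commute)
  ultimately show ?thesis by simp
qed

locale expansion_of_ideal =
  fixes n M :: nat and I :: "nat set"
  assumes even_n: "even n" and lower: "2 ^ M \<le> n" and upper: "n < 2 ^ Suc M"
    and ideal: "fence_ideal (bit n) M I"
begin

text \<open>The digits are obtained by solving \<open>digit_plus_carry\<close> for the digit, with \<open>I\<close> as carry set.\<close>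

definition forced_digit :: "nat \<Rightarrow> nat" where
  "forced_digit j = of_bool (bit n j) + 2 * of_bool (Suc j \<in> I) - of_bool (j \<in> I)"

definition word_length :: nat where
  "word_length = (if M \<in> I then M else Suc M)"

definition word :: "nat list" where
  "word = rev (map forced_digit [0..<word_length])"

lemma div_power_M: "n div 2 ^ M = 1"
  using lower upper by (rule div_power_eq_1)

lemma I_subset: "I \<subseteq> {1..M}"
  using ideal by (rule fence_ideal_subset)

lemma forced_digit_plus_carry:
  "forced_digit j + of_bool (j \<in> I) = of_bool (bit n j) + 2 * of_bool (Suc j \<in> I)"
proof -
  have "bit n j \<or> Suc j \<in> I" if "j \<in> I"
  proof (cases "j = M")
    case True
    then show ?thesis using div_power_M by (simp add: bit_iff_odd)
  next
    case False
    then show ?thesis using that I_subset fence_idealD_succ[OF ideal, of j] by fastforce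
  qed
  then show ?thesis by (auto simp: forced_digit_def)
qed

lemma forced_digit_le_2: "forced_digit j \<le> 2"
proof -
  have "j \<in> I" if "bit n j" "Suc j \<in> I"
  proof (cases j)
    case 0
    then show ?thesis using that even_n by (simp add: bit_0)
  next
    case (Suc i)
    then show ?thesis using that I_subset fence_idealD_pred[OF ideal, of j] by fastforce
  qed
  then show ?thesis by (auto simp: forced_digit_def)
qed

lemma high_part_word: "high_part word j + of_bool (j \<in> I) = n div 2 ^ j"
proof (cases "j \<le> word_length")
  case True
  have top: "n div 2 ^ word_length = of_bool (word_length \<in> I)"
  proof (cases "M \<in> I")
    case False
    have "n div 2 ^ Suc M = 0" using upper by simp
    then show ?thesis using False I_subset by (auto simp: word_length_def)
  qed (simp add: word_length_def div_power_M)
  have "hval (rev (map forced_digit [i..<word_length])) + of_bool (i \<in> I) + 2 ^ (word_length - i) * (n div 2 ^ word_length) =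
      n div 2 ^ i + 2 ^ (word_length - i) * of_bool (word_length \<in> I)" if "i \<le> word_length" for i
    using that
  proof (induction rule: inc_induct)
    case (step i)
    then have "[i..<word_length] = i # [Suc i..<word_length]" "word_length - i = Suc (word_length - Suc i)" by (auto simp: upt_conv_Cons)
    then show ?case
      using step.IH forced_digit_plus_carry[of i] div_power_eq_bit_plus_div_power_Suc[of n i]
      by (simp add: hval_snoc algebra_simps)
  qed simp
  moreover have "high_part word j = hval (rev (map forced_digit [j..<word_length]))"
    using True by (simp add: high_part_def word_def take_rev drop_map)
  ultimately show ?thesis using True top by simp
next
  case False
  moreover have "M \<le> word_length" by (simp add: word_length_def)
  ultimately have "high_part word j = 0" "j \<notin> I" using I_subset by (auto simp: high_part_def word_def)
  moreover have "(2::nat) ^ Suc M \<le> 2 ^ j"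
    using False by (intro power_increasing) (auto simp: word_length_def split: if_splits)
  ultimately show ?thesis using upper by simp
qed

lemma word_hyperbinary: "word \<in> hyperbinary n"
proof -
  have digits: "forced_digit j \<in> {0, 1, 2}" for j
    using forced_digit_le_2[of j] by (auto simp: numeral_2_eq_2 le_Suc_eq)
  have "set word \<subseteq> {0, 1, 2}"
    unfolding word_def set_rev set_map by (rule image_subsetI) (rule digits)
  moreover have "0 \<notin> I" using I_subset by auto
  then have "hval word = n" using high_part_word[of 0] by (simp add: high_part_0)
  moreover have "hd word \<noteq> 0"
  proof -
    have "word_length \<noteq> 0" using I_subset by (auto simp: word_length_def)
    then have hd: "hd word = forced_digit (word_length - 1)" by (simp add: word_def hd_rev last_map)
    show ?thesis
    proof (cases "M \<in> I")
      case True
      then have "forced_digit (word_length - 1) + of_bool (word_length - 1 \<in> I) \<ge> 2"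
        using forced_digit_plus_carry[of "word_length - 1"] \<open>word_length \<noteq> 0\<close> by (simp add: word_length_def)
      then show ?thesis using hd by (cases "word_length - 1 \<in> I") auto
    next
      case False
      then show ?thesis using hd div_power_M I_subset by (auto simp: word_length_def forced_digit_def bit_iff_odd)
    qed
  qed
  ultimately show ?thesis by (simp add: hyperbinary_def)
qed

lemma carry_set_word: "carry_set n word = I"
proof (rule set_eqI)
  fix j
  have "of_bool (j \<in> carry_set n word) = (of_bool (j \<in> I) :: nat)"
    using high_part_word[of j] div_eq_high_part_plus_carry[OF word_hyperbinary, of j] by simp
  then show "j \<in> carry_set n word \<longleftrightarrow> j \<in> I"
    by (cases "j \<in> carry_set n word"; cases "j \<in> I") auto
qed

end

lemma carry_set_bij:
  assumes "even n" and "2 ^ M \<le> n" and "n < 2 ^ Suc M"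
  shows "bij_betw (carry_set n) (hyperbinary n) {I. fence_ideal (bit n) M I}"
proof -
  have "I \<in> carry_set n ` hyperbinary n" if "fence_ideal (bit n) M I" for I
  proof -
    interpret expansion_of_ideal n M I using assms that by unfold_locales
    show ?thesis using word_hyperbinary carry_set_word by (metis image_eqI)
  qed
  then show ?thesis
    using inj_on_carry_set carry_set_fence_ideal \<open>n < 2 ^ Suc M\<close> by (auto simp: bij_betw_def)
qed

section \<open>Arcs of \<open>A(n)\<close> remove one element from the carry set\<close>

definition hyperbinary_arc :: "nat \<Rightarrow> bool \<Rightarrow> nat list \<Rightarrow> nat list \<Rightarrow> bool" where
  "hyperbinary_arc n l = (if l then arcA n else arcB n)"

lemma A_iso_iff_labelled_iso:
  "A_iso m n \<longleftrightarrow>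
     (\<exists>\<phi>. labelled_iso (hyperbinary m) (hyperbinary_arc m) (hyperbinary n) (hyperbinary_arc n) \<phi>)"
  by (simp add: A_iso_def labelled_iso_def hyperbinary_arc_def all_bool_eq conj_commute)

lemma high_part_carry_out:
  "high_part ([1, 0] @ y) j = high_part (2 # y) j + of_bool (j = Suc (length y))"
  using high_part_rewrite[of "[]" 0 y j] high_part_Cons_0[of "2 # y"] by simp

lemma zero_notin_carry_set: "w \<in> hyperbinary n \<Longrightarrow> 0 \<notin> carry_set n w"
  using hval_hyperbinary by (simp add: carry_set_def high_part_0)

lemma bit_iff_digit_eq_0:
  assumes "w \<in> hyperbinary n" and "p \<in> carry_set n w" and "digit w p \<le> 1"
  shows "bit n p \<longleftrightarrow> digit w p = 0"
  using digit_plus_carry[OF assms(1), of p] assms(2,3)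
  by (cases "bit n p"; cases "Suc p \<in> carry_set n w") auto

lemma hyperbinary_arc_imp_ideal_cover:
  assumes u: "u \<in> hyperbinary n" and v: "v \<in> hyperbinary n" and arc: "hyperbinary_arc n l u v"
  shows "ideal_cover (bit n) l (carry_set n u) (carry_set n v)"
proof -
  obtain y :: "nat list" and a :: nat where a: "a \<le> 1" "l \<longleftrightarrow> a = 0" "digit u (Suc (length y)) = a"
    and high: "\<forall>j. high_part v j = high_part u j + of_bool (j = Suc (length y))"
  proof (cases l)
    case True
    then have "(\<exists>x y. u = x @ [0, 2] @ y \<and> v = x @ [1, 0] @ y) \<or> (\<exists>y. u = 2 # y \<and> v = [1, 0] @ y)"
      using arc by (simp add: hyperbinary_arc_def arcA_def)
    then show ?thesis
    proof (elim disjE exE conjE)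
      fix x y assume "u = x @ [0, 2] @ y" "v = x @ [1, 0] @ y"
      then show ?thesis using that[of 0 y] True high_part_rewrite[of x 0 y] by (simp add: digit_def nth_append)
    next
      fix y assume "u = 2 # y" "v = [1, 0] @ y"
      then show ?thesis using that[of 0 y] True high_part_carry_out[of y] by (simp add: digit_def)
    qed
  next
    case False
    then obtain x y where "u = x @ [1, 2] @ y" "v = x @ [Suc 1, 0] @ y"
      using arc by (auto simp: hyperbinary_arc_def arcB_def)
    then show ?thesis using that[of 1 y] False high_part_rewrite[of x 1 y] by (simp add: digit_def nth_append)
  qed
  let ?p = "Suc (length y)"
  have "?p \<in> carry_set n u" "carry_set n v = carry_set n u - {?p}"
    using carry_set_remove_iff[OF u v] high by blast+
  moreover have "bit n ?p = l" using bit_iff_digit_eq_0[OF u \<open>?p \<in> carry_set n u\<close>] a by simp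
  ultimately show ?thesis unfolding ideal_cover_def by blast
qed

lemma ideal_cover_digits:
  assumes u: "u \<in> hyperbinary n" and v: "v \<in> hyperbinary n"
    and p: "p \<in> carry_set n u" "carry_set n v = carry_set n u - {p}"
  obtains i where "p = Suc i" and "digit u i = 2" and "digit u p \<le> 1"
proof -
  have high: "high_part v j = high_part u j + of_bool (j = p)" for j
    using carry_set_remove_iff[OF u v] p by blast
  obtain i where i: "p = Suc i" using p zero_notin_carry_set[OF u] by (cases p) auto
  have "digit u i = 2"
    using high_part_Suc[of u i] high_part_Suc[of v i] high[of i] high[of p] i digit_le_2[OF u, of i]
    by simp
  moreover have "digit u p \<le> 1"
    using high_part_Suc[of u p] high_part_Suc[of v p] high[of p] high[of "Suc p"] digit_le_2[OF v, of p]
    by simp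
  ultimately show ?thesis using that i by blast
qed

lemma drop_eq_digit_Cons:
  assumes "j < length w"
  shows "drop (length w - Suc j) w = digit w j # drop (length w - j) w"
proof -
  have "length w - Suc j < length w" "Suc (length w - Suc j) = length w - j" using assms by auto
  then show ?thesis using Cons_nth_drop_Suc[of "length w - Suc j" w] assms by (simp add: digit_def)
qed

lemma hyperbinary_split_at_2:
  assumes u: "u \<in> hyperbinary n" and two: "digit u i = 2"
  obtains x y where "length y = i" and "u = x @ [digit u (Suc i), 2] @ y"
    | y where "length y = i" and "u = 2 # y" and "digit u (Suc i) = 0"
proof -
  define y where "y = drop (length u - i) u"
  have "i < length u" using two by (simp add: digit_def split: if_splits)
  then have y: "length y = i" "drop (length u - Suc i) u = 2 # y"
    using drop_eq_digit_Cons[of i u] two by (simp_all add: y_def)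
  show ?thesis
  proof (cases "Suc i < length u")
    case True
    define x where "x = take (length u - Suc (Suc i)) u"
    have "u = x @ drop (length u - Suc (Suc i)) u" by (simp add: x_def)
    also have "\<dots> = x @ [digit u (Suc i), 2] @ y" using drop_eq_digit_Cons[OF True] y by simp
    finally show ?thesis using that(1) y by blast
  next
    case False
    then have "length u = Suc i" using \<open>i < length u\<close> by simp
    then show ?thesis using that(2) y by (simp add: digit_def)
  qed
qed

lemma carry_in_hyperbinary:
  assumes "x @ [a, 2] @ y \<in> hyperbinary n" and "a \<le> 1"
  shows "x @ [Suc a, 0] @ y \<in> hyperbinary n"
proof -
  have "hval (x @ [Suc a, 0] @ y) = hval (x @ [a, 2] @ y)"
    using high_part_rewrite[of x a y 0] by (simp add: high_part_0)
  moreover have "hd (x @ [Suc a, 0] @ y) \<noteq> 0"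
    using assms(1) by (cases x) (auto simp: hyperbinary_def)
  ultimately show ?thesis using assms by (auto simp: hyperbinary_def)
qed

lemma carry_out_hyperbinary: "2 # y \<in> hyperbinary n \<Longrightarrow> [1, 0] @ y \<in> hyperbinary n"
  by (auto simp: hyperbinary_def)

lemma ideal_cover_imp_hyperbinary_arc:
  assumes u: "u \<in> hyperbinary n" and v: "v \<in> hyperbinary n"
    and cover: "ideal_cover (bit n) l (carry_set n u) (carry_set n v)"
  shows "hyperbinary_arc n l u v"
proof -
  obtain p where p: "p \<in> carry_set n u" "carry_set n v = carry_set n u - {p}" "bit n p = l"
    using cover by (auto simp: ideal_cover_def)
  have high: "\<And>j. high_part v j = high_part u j + of_bool (j = p)"
    using carry_set_remove_iff[OF u v] p by blast
  obtain i where i: "p = Suc i" "digit u i = 2" "digit u p \<le> 1"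
    using ideal_cover_digits[OF u v p(1,2)] by blast
  have l: "l \<longleftrightarrow> digit u p = 0" using bit_iff_digit_eq_0[OF u p(1) i(3)] p(3) by simp
  from u i(2) show ?thesis
  proof (cases rule: hyperbinary_split_at_2)
    case (1 x y)
    let ?a = "digit u p" and ?v = "x @ [Suc (digit u p), 0] @ y"
    have "?v \<in> hyperbinary n" using carry_in_hyperbinary u i 1 by simp
    moreover have "high_part ?v j = high_part v j" for j
      using high_part_rewrite[of x ?a y j] high[of j] 1 i by simp
    ultimately have "v = ?v" using hyperbinary_eqI[OF v] by metis
    consider "?a = 0" | "?a = 1" using i(3) by linarith
    then show ?thesis
      using \<open>v = ?v\<close> u v 1 i l
      by cases (auto simp: hyperbinary_arc_def arcA_def arcB_def numeral_2_eq_2)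
  next
    case (2 y)
    have "[1, 0] @ y \<in> hyperbinary n" using carry_out_hyperbinary u 2 by simp
    moreover have "high_part ([1, 0] @ y) j = high_part v j" for j
      using high_part_carry_out[of y j] high[of j] 2 i by simp
    ultimately have "v = [1, 0] @ y" using hyperbinary_eqI[OF v] by metis
    then show ?thesis using u v 2 i l by (auto simp: hyperbinary_arc_def arcA_def)
  qed
qed

section \<open>Recovering \<open>n\<close> from \<open>A(n)\<close>\<close>

lemma floor_log_bounds:
  assumes "n \<noteq> 0"
  shows "2 ^ floor_log n \<le> n" and "n < 2 ^ Suc (floor_log n)"
  using floor_log_exp2_le[of n] floor_log_exp2_gt[of n] assms by simp_all

lemma bit_floor_log: "n \<noteq> 0 \<Longrightarrow> bit n (floor_log n)"
  using div_power_eq_1[OF floor_log_bounds] by (simp add: bit_iff_odd)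

lemma one_le_floor_log: "even n \<Longrightarrow> n \<noteq> 0 \<Longrightarrow> 1 \<le> floor_log n"
  using floor_log_rec[of n] by (cases "n = 1") auto

lemma carry_set_labelled_iso:
  assumes "even n" and "n \<noteq> 0"
  shows "labelled_iso (hyperbinary n) (hyperbinary_arc n)
    {I. fence_ideal (bit n) (floor_log n) I} (ideal_cover (bit n)) (carry_set n)"
  using carry_set_bij[OF \<open>even n\<close> floor_log_bounds[OF \<open>n \<noteq> 0\<close>]]
    hyperbinary_arc_imp_ideal_cover ideal_cover_imp_hyperbinary_arc
  unfolding labelled_iso_def by blast

lemma hyperbinary_0: "hyperbinary 0 = {[]}"
proof -
  have "w = []" if "w \<in> hyperbinary 0" for w
  proof (cases w)
    case (Cons d xs)
    then show ?thesis using that by (auto simp: hyperbinary_def)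
  qed
  then show ?thesis by (auto simp: hyperbinary_def)
qed

lemma card_hyperbinary_eq_1_iff:
  assumes "even n"
  shows "card (hyperbinary n) = 1 \<longleftrightarrow> n = 0"
proof
  assume card: "card (hyperbinary n) = 1"
  show "n = 0"
  proof (rule ccontr)
    assume "n \<noteq> 0"
    let ?M = "floor_log n"
    have "1 \<le> ?M" using one_le_floor_log \<open>even n\<close> \<open>n \<noteq> 0\<close> by blast
    have "card {I. fence_ideal (bit n) ?M I} = 1"
      using card carry_set_bij[OF \<open>even n\<close> floor_log_bounds[OF \<open>n \<noteq> 0\<close>]] bij_betw_same_card by metis
    moreover have "fence_ideal (bit n) ?M {}" "fence_ideal (bit n) ?M {1..?M}"
      by (auto simp: fence_ideal_def)
    ultimately have "{} = {1..?M}" by (metis (mono_tags) card_1_singleton_iff One_nat_def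
        mem_Collect_eq singletonD)
    then show False using \<open>1 \<le> ?M\<close> by simp
  qed
qed (simp add: hyperbinary_0)

lemma even_nat_eqI:
  fixes m n :: nat
  assumes "even m" and "even n" and "floor_log m = floor_log n"
    and "\<And>p. p \<in> {1..floor_log n} \<Longrightarrow> bit m p \<longleftrightarrow> bit n p"
  shows "m = n"
proof (rule bit_eqI)
  fix p
  have "n div 2 ^ p = 0" "m div 2 ^ p = 0" if "floor_log n < p"
  proof -
    have "(2::nat) ^ Suc (floor_log n) \<le> 2 ^ p" using that by (intro power_increasing) auto
    then show "n div 2 ^ p = 0" "m div 2 ^ p = 0"
      using floor_log_exp2_gt[of n] floor_log_exp2_gt[of m] assms(3) by simp_all
  qed
  then show "bit m p \<longleftrightarrow> bit n p"
    using assms by (cases "p = 0"; cases "p \<le> floor_log n") (auto simp: bit_0 bit_iff_odd)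
qed

theorem mainTheorem10:
  fixes m n :: nat
  assumes "even m" and "even n" and "A_iso m n"
  shows "m = n"
proof -
  obtain \<phi> where iso: "labelled_iso (hyperbinary m) (hyperbinary_arc m) (hyperbinary n) (hyperbinary_arc n) \<phi>"
    using \<open>A_iso m n\<close> A_iso_iff_labelled_iso by blast
  then have "card (hyperbinary m) = card (hyperbinary n)"
    unfolding labelled_iso_def using bij_betw_same_card by blast
  then have "m = 0 \<longleftrightarrow> n = 0" using card_hyperbinary_eq_1_iff assms(1,2) by metis
  show ?thesis
  proof (cases "m = 0")
    case False
    with \<open>m = 0 \<longleftrightarrow> n = 0\<close> have "n \<noteq> 0" by simp
    have "labelled_iso {I. fence_ideal (bit m) (floor_log m) I} (ideal_cover (bit m))
      {I. fence_ideal (bit n) (floor_log n) I} (ideal_cover (bit n))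
      (carry_set n \<circ> \<phi> \<circ> inv_into (hyperbinary m) (carry_set m))"
      using carry_set_labelled_iso[OF \<open>even m\<close> False] carry_set_labelled_iso[OF \<open>even n\<close> \<open>n \<noteq> 0\<close>] iso
      by (blast intro: labelled_iso_comp labelled_iso_inv)
    moreover have "1 \<le> floor_log m" using one_le_floor_log \<open>even m\<close> False by blast
    ultimately have "floor_log n = floor_log m \<and> (\<forall>p\<in>{1..floor_log m}. bit n p = bit m p)"
      using fence_ideals_iso_eq bit_floor_log False \<open>n \<noteq> 0\<close> by blast
    then show ?thesis using even_nat_eqI[OF \<open>even m\<close> \<open>even n\<close>] by simp
  qed (use \<open>m = 0 \<longleftrightarrow> n = 0\<close> in simp)
qed

end
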